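(* Consider the power-law kinetic system on species $A_1,A_2,A_3$ with reactions $R_1: A_1+A_3\to A_1+A_2$, $R_2: A_1+A_2\to 2A_3$, $R_3: 2A_3\to A_1+A_3$, $R_4: A_3\to 0$, $R_5: A_3\to A_2+A_3$, with rates $k_r x^{F_r}$ where the kinetic order rows are $F_{R_1}=(0.5,0,0.5)$, $F_{R_2}=(1,1,0)$, $F_{R_3}=(0,0,1)$, $F_{R_4}=(0,0,1)$, $F_{R_5}=(0,0,1)$. This network has deficiency one, is not $t$-minimal, and the complexes $A_1+A_2$ and $2A_3$ do not form a cut pair; nevertheless the system has the capacity for multistationarity: there exist positive rate constants $k_{R_1},\dots,k_{R_5}$ for which $dx/dt=\sum_r k_r x^{F_r}(y'_r-y_r)$ has two distinct positive equilibria $c^*,c^{**}$ with $c^*-c^{**}$ in the stoichiometric subspace.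
   Context: For $x\in\mathbb{R}^3_{>0}$, $x^{F}=\prod_s x_s^{F_s}$; $y_r\to y'_r$ denotes reaction $r$. The stoichiometric subspace $S$ is the span of the reaction vectors. The deficiency is $n-l-\dim S$ ($n$ complexes, $l$ linkage classes, i.e. connected components of the reaction graph). A network is $t$-minimal if its number of terminal strong linkage classes (strongly connected components with no outgoing reaction) equals its number of linkage classes. Two adjacent complexes form a cut pair if removing the reaction arrow(s) between them disconnects their linkage class. *)

theory Defs
  imports "HOL-Analysis.Analysis"
begin

text \<open>Complexes are vectors in R^3 (coordinates = stoichiometric coefficients of
A1, A2, A3); a reaction y -> y' is the pair (y, y').\<close>

type_synonym cplx = "real^3"
type_synonym reaction = "cplx \<times> cplx"

definition complexes :: "reaction set \<Rightarrow> cplx set" where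
  "complexes R = fst ` R \<union> snd ` R"

definition linked :: "reaction set \<Rightarrow> (cplx \<times> cplx) set" where
  "linked R = (R \<union> R\<inverse>)\<^sup>*"

definition linkage_classes :: "reaction set \<Rightarrow> cplx set set" where
  "linkage_classes R = complexes R // linked R"

definition stoich_subspace :: "reaction set \<Rightarrow> cplx set" where
  "stoich_subspace R = span {snd r - fst r | r. r \<in> R}"

definition deficiency :: "reaction set \<Rightarrow> int" where
  "deficiency R = int (card (complexes R)) - int (card (linkage_classes R))
                   - int (dim (stoich_subspace R))"

definition strong_linkage_classes :: "reaction set \<Rightarrow> cplx set set" where
  "strong_linkage_classes R =
     complexes R // {(a, b). (a, b) \<in> R\<^sup>* \<and> (b, a) \<in> R\<^sup>*}"

definition terminal_strong_linkage_classes :: "reaction set \<Rightarrow> cplx set set" where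
  "terminal_strong_linkage_classes R =
     {C \<in> strong_linkage_classes R. \<forall>(a, b) \<in> R. a \<in> C \<longrightarrow> b \<in> C}"

definition t_minimal :: "reaction set \<Rightarrow> bool" where
  "t_minimal R \<longleftrightarrow>
     card (terminal_strong_linkage_classes R) = card (linkage_classes R)"

definition cut_pair :: "reaction set \<Rightarrow> cplx \<Rightarrow> cplx \<Rightarrow> bool" where
  "cut_pair R a b \<longleftrightarrow>
     ((a, b) \<in> R \<or> (b, a) \<in> R) \<and> (a, b) \<notin> linked (R - {(a, b), (b, a)})"

definition xpow :: "real^3 \<Rightarrow> real^3 \<Rightarrow> real" where
  "xpow x F = (\<Prod>s\<in>UNIV. (x $ s) powr (F $ s))"

definition positive_vec :: "real^3 \<Rightarrow> bool" where
  "positive_vec x \<longleftrightarrow> (\<forall>s. x $ s > 0)"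

definition yR :: "nat \<Rightarrow> cplx" where
  "yR r = (if r = 1 then vector [1, 0, 1]      \<comment> \<open>A1 + A3\<close>
           else if r = 2 then vector [1, 1, 0] \<comment> \<open>A1 + A2\<close>
           else if r = 3 then vector [0, 0, 2] \<comment> \<open>2 A3\<close>
           else vector [0, 0, 1])              \<comment> \<open>A3 (r = 4, 5)\<close>"

definition yP :: "nat \<Rightarrow> cplx" where
  "yP r = (if r = 1 then vector [1, 1, 0]      \<comment> \<open>A1 + A2\<close>
           else if r = 2 then vector [0, 0, 2] \<comment> \<open>2 A3\<close>
           else if r = 3 then vector [1, 0, 1] \<comment> \<open>A1 + A3\<close>
           else if r = 4 then 0                \<comment> \<open>0\<close>
           else vector [0, 1, 1])              \<comment> \<open>A2 + A3\<close>"

definition kinF :: "nat \<Rightarrow> real^3" where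
  "kinF r = (if r = 1 then vector [1/2, 0, 1/2]
             else if r = 2 then vector [1, 1, 0]
             else vector [0, 0, 1])"

definition net :: "reaction set" where
  "net = {(yR r, yP r) | r. r \<in> {1..5::nat}}"

definition rhs :: "(nat \<Rightarrow> real) \<Rightarrow> real^3 \<Rightarrow> real^3" where
  "rhs k x = (\<Sum>r\<in>{1..5::nat}. (k r * xpow x (kinF r)) *\<^sub>R (yP r - yR r))"

end

theory Submission
  imports Defs
begin

text \<open>The network has six complexes in two linkage classes: the cycle
A1+A3 \<rightarrow> A1+A2 \<rightarrow> 2A3 \<rightarrow> A1+A3 and the branch 0 \<leftarrow> A3 \<rightarrow> A2+A3, whose
reaction vectors already span R^3, so the deficiency is 6 - 2 - 3 = 1.  The
branch contains two terminal strong linkage classes, so the network is not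
t-minimal, and A1+A2, 2A3 lie on the cycle, so they do not form a cut pair.  For
k_3 = 2 and all other rate constants 1 every point (t, 2, t) with t > 0 is an
equilibrium; since the stoichiometric subspace is all of R^3, any two of them
are stoichiometrically compatible.\<close>

lemma rtrancl_subset_refl_trans:
  assumes "E \<subseteq> P" and "refl P" and "trans P"
  shows "E\<^sup>* \<subseteq> P"
proof (rule subrelI)
  fix x y assume "(x, y) \<in> E\<^sup>*"
  then show "(x, y) \<in> P"
  proof (induction rule: rtrancl_induct)
    case base
    show ?case using \<open>refl P\<close> by (simp add: refl_onD)
  next
    case (step y z)
    then show ?case using assms(1,3) by (blast elim: transE)
  qed
qed

lemma trans_Id_Un_blocks:
  assumes "A \<inter> B = {}"
  shows "trans (Id \<union> A \<times> A \<union> B \<times> B)"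
  using assms by (intro transI) blast

lemma trans_Id_Un_block_Un_source:
  assumes "A \<inter> B = {}" "a \<in> B"
  shows "trans (Id \<union> A \<times> A \<union> {a} \<times> B)"
  using assms by (intro transI) blast

lemma cycle3_rtrancl:
  assumes "(a, b) \<in> R" "(b, c) \<in> R" "(c, a) \<in> R"
  shows "{a, b, c} \<times> {a, b, c} \<subseteq> R\<^sup>*"
  using assms by (blast intro: rtrancl_into_rtrancl)

lemma fork_rtrancl_symcl:
  assumes "(a, b) \<in> R" "(a, c) \<in> R"
  shows "{a, b, c} \<times> {a, b, c} \<subseteq> (R \<union> R\<inverse>)\<^sup>*"
  using assms by (blast intro: rtrancl_into_rtrancl)

lemma image_if_mem_Un:
  assumes "A \<inter> B = {}" "A \<noteq> {}"
  shows "(\<lambda>x. if x \<in> A then A else f x) ` (A \<union> B) = insert A (f ` B)"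
  using assms by (auto simp: image_iff)

lemma quotient_eq_image:
  assumes "\<And>x. x \<in> A \<Longrightarrow> r `` {x} = f x"
  shows "A // r = f ` A"
  using assms unfolding quotient_def by auto

lemma vector3_eq_iff:
  "(vector [a1, a2, a3] :: 'a::zero^3) = vector [b1, b2, b3] \<longleftrightarrow> a1 = b1 \<and> a2 = b2 \<and> a3 = b3"
  by (auto simp: vec_eq_iff forall_3)

lemma vector3_eq_0_iff:
  "(vector [a1, a2, a3] :: 'a::zero^3) = 0 \<longleftrightarrow> a1 = 0 \<and> a2 = 0 \<and> a3 = 0"
  by (auto simp: vec_eq_iff forall_3)

lemma prod_UNIV_3: "prod f (UNIV :: 3 set) = f 1 * f 2 * f 3"
  unfolding UNIV_3 by (simp add: mult.assoc)

lemma xpow_vector3: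
  "xpow (vector [x1, x2, x3]) (vector [a1, a2, a3]) = x1 powr a1 * x2 powr a2 * x3 powr a3"
  unfolding xpow_def prod_UNIV_3 by simp

definition A1_A3 :: cplx where "A1_A3 = vector [1, 0, 1]"
definition A1_A2 :: cplx where "A1_A2 = vector [1, 1, 0]"
definition two_A3 :: cplx where "two_A3 = vector [0, 0, 2]"
definition A3 :: cplx where "A3 = vector [0, 0, 1]"
definition A2_A3 :: cplx where "A2_A3 = vector [0, 1, 1]"

lemmas complex_defs = A1_A3_def A1_A2_def two_A3_def A3_def A2_A3_def

lemma complexes_distinct: "distinct [A1_A3, A1_A2, two_A3, A3, 0, A2_A3]"
  by (simp add: complex_defs vector3_eq_iff vector3_eq_0_iff eq_commute[of 0])

definition triangle_class :: "cplx set" where "triangle_class = {A1_A3, A1_A2, two_A3}"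
definition branch_class :: "cplx set" where "branch_class = {A3, 0, A2_A3}"

lemma triangle_class_branch_class_disjoint: "triangle_class \<inter> branch_class = {}"
  using complexes_distinct by (auto simp: triangle_class_def branch_class_def)

lemma net_eq: "net = {(A1_A3, A1_A2), (A1_A2, two_A3), (two_A3, A1_A3), (A3, 0), (A3, A2_A3)}"
proof -
  have "{1..5::nat} = {1, 2, 3, 4, 5}"
    by auto
  then have "net = (\<lambda>r. (yR r, yP r)) ` {1, 2, 3, 4, 5}"
    unfolding net_def by blast
  then show ?thesis by (simp add: yR_def yP_def complex_defs)
qed

lemma complexes_net: "complexes net = triangle_class \<union> branch_class"
  by (auto simp: complexes_def net_eq triangle_class_def branch_class_def)

lemma card_complexes_net: "card (complexes net) = 6"
proof -
  have "complexes net = set [A1_A3, A1_A2, two_A3, A3, 0, A2_A3]"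
    by (auto simp: complexes_net triangle_class_def branch_class_def)
  then show ?thesis
    using complexes_distinct by (simp only: distinct_card) simp
qed

lemma rtrancl_net: "net\<^sup>* = Id \<union> triangle_class \<times> triangle_class \<union> {A3} \<times> branch_class"
  (is "_ = ?P")
proof
  have "trans ?P"
    by (rule trans_Id_Un_block_Un_source[OF triangle_class_branch_class_disjoint])
      (simp add: branch_class_def)
  moreover have "net \<subseteq> ?P"
    by (auto simp: net_eq triangle_class_def branch_class_def)
  ultimately show "net\<^sup>* \<subseteq> ?P"
    by (intro rtrancl_subset_refl_trans) (auto intro: refl_onI)
next
  have "triangle_class \<times> triangle_class \<subseteq> net\<^sup>*"
    unfolding triangle_class_def by (rule cycle3_rtrancl) (auto simp: net_eq)
  moreover have "{A3} \<times> branch_class \<subseteq> net\<^sup>*"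
    by (auto simp: branch_class_def net_eq)
  ultimately show "?P \<subseteq> net\<^sup>*"
    by auto
qed

lemma linked_net:
  "linked net = Id \<union> triangle_class \<times> triangle_class \<union> branch_class \<times> branch_class"
  (is "_ = ?P")
proof
  have "trans ?P"
    by (rule trans_Id_Un_blocks[OF triangle_class_branch_class_disjoint])
  moreover have "net \<union> net\<inverse> \<subseteq> ?P"
    by (auto simp: net_eq triangle_class_def branch_class_def)
  ultimately show "linked net \<subseteq> ?P"
    unfolding linked_def by (intro rtrancl_subset_refl_trans) (auto intro: refl_onI)
next
  have "triangle_class \<times> triangle_class \<subseteq> net\<^sup>*"
    unfolding rtrancl_net by blast
  also have "\<dots> \<subseteq> linked net"
    unfolding linked_def by (rule rtrancl_mono) blast
  finally have "triangle_class \<times> triangle_class \<subseteq> linked net" .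
  moreover have "branch_class \<times> branch_class \<subseteq> linked net"
    unfolding linked_def branch_class_def by (rule fork_rtrancl_symcl) (auto simp: net_eq)
  ultimately show "?P \<subseteq> linked net"
    by (auto simp: linked_def)
qed

lemma linkage_classes_net: "linkage_classes net = {triangle_class, branch_class}"
proof -
  have "linkage_classes net =
      (\<lambda>x. if x \<in> triangle_class then triangle_class else branch_class) ` complexes net"
    unfolding linkage_classes_def
    by (rule quotient_eq_image)
      (use triangle_class_branch_class_disjoint in \<open>auto simp: linked_net complexes_net\<close>)
  also have "\<dots> = {triangle_class, branch_class}"
    unfolding complexes_net
    by (subst image_if_mem_Un[OF triangle_class_branch_class_disjoint])
      (auto simp: triangle_class_def branch_class_def)
  finally show ?thesis .
qed

lemma card_linkage_classes_net: "card (linkage_classes net) = 2"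
proof -
  have "triangle_class \<noteq> branch_class"
    using triangle_class_branch_class_disjoint by (auto simp: triangle_class_def)
  then show ?thesis
    by (simp add: linkage_classes_net)
qed

lemma strong_linkage_classes_net:
  "strong_linkage_classes net = {triangle_class, {A3}, {0}, {A2_A3}}"
proof -
  have "strong_linkage_classes net =
      (\<lambda>x. if x \<in> triangle_class then triangle_class else {x}) ` complexes net"
    unfolding strong_linkage_classes_def
    by (rule quotient_eq_image)
      (use triangle_class_branch_class_disjoint in \<open>auto simp: rtrancl_net complexes_net\<close>)
  also have "\<dots> = {triangle_class, {A3}, {0}, {A2_A3}}"
    unfolding complexes_net
    by (subst image_if_mem_Un[OF triangle_class_branch_class_disjoint])
      (auto simp: triangle_class_def branch_class_def)
  finally show ?thesis .
qed

lemma terminal_strong_linkage_classes_net: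
  "terminal_strong_linkage_classes net = {triangle_class, {0}, {A2_A3}}"
proof -
  have "\<forall>(a, b) \<in> net. a \<in> triangle_class \<longrightarrow> b \<in> triangle_class"
    using triangle_class_branch_class_disjoint
    by (auto simp: net_eq triangle_class_def branch_class_def)
  moreover have "\<forall>(a, b) \<in> net. a \<in> {0} \<longrightarrow> b \<in> {0}"
    "\<forall>(a, b) \<in> net. a \<in> {A2_A3} \<longrightarrow> b \<in> {A2_A3}"
    using complexes_distinct by (auto simp: net_eq)
  moreover have "\<not> (\<forall>(a, b) \<in> net. a \<in> {A3} \<longrightarrow> b \<in> {A3})"
    using complexes_distinct by (auto simp: net_eq)
  ultimately show ?thesis
    unfolding terminal_strong_linkage_classes_def strong_linkage_classes_net by auto
qed

lemma not_t_minimal_net: "\<not> t_minimal net"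
proof -
  have "card {triangle_class, {0}, {A2_A3}} = 3"
    using complexes_distinct by (auto simp: triangle_class_def card_insert_if)
  then show ?thesis
    by (simp add: t_minimal_def terminal_strong_linkage_classes_net card_linkage_classes_net)
qed

lemma stoich_subspace_net: "stoich_subspace net = UNIV"
proof -
  let ?S = "{snd r - fst r | r. r \<in> net}"
  have reaction_vectors: "A1_A3 - two_A3 \<in> ?S" "0 - A3 \<in> ?S" "A2_A3 - A3 \<in> ?S"
    by (force simp: net_eq)+
  have "x \<in> span ?S" for x :: cplx
  proof -
    have "x = (x$1) *\<^sub>R (A1_A3 - two_A3) + (x$2) *\<^sub>R (A2_A3 - A3) + (-(x$1 + x$3)) *\<^sub>R (0 - A3)"
      by (simp add: vec_eq_iff forall_3 complex_defs)
    also have "\<dots> \<in> span ?S"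
      by (intro span_add span_mul span_base reaction_vectors)
    finally show ?thesis .
  qed
  then show ?thesis
    unfolding stoich_subspace_def by auto
qed

lemma deficiency_net: "deficiency net = 1"
  by (simp add: deficiency_def card_complexes_net card_linkage_classes_net stoich_subspace_net)

lemma not_cut_pair_net: "\<not> cut_pair net A1_A2 two_A3"
proof -
  let ?R = "net - {(A1_A2, two_A3), (two_A3, A1_A2)}"
  have "(A1_A3, A1_A2) \<in> ?R" "(two_A3, A1_A3) \<in> ?R"
    using complexes_distinct by (auto simp: net_eq)
  then have "(A1_A2, two_A3) \<in> (?R \<union> ?R\<inverse>)\<^sup>*"
    by (meson UnI2 converseI converse_rtrancl_into_rtrancl r_into_rtrancl)
  then show ?thesis
    by (simp add: cut_pair_def linked_def)
qed

lemma rhs_net: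
  assumes "x1 > 0" "x2 > 0" "x3 > 0"
  shows "rhs k (vector [x1, x2, x3]) =
    vector [k 3 * x3 - k 2 * x1 * x2,
            k 1 * sqrt (x1 * x3) - k 2 * x1 * x2 + k 5 * x3,
            2 * k 2 * x1 * x2 - k 1 * sqrt (x1 * x3) - k 3 * x3 - k 4 * x3]"
proof -
  have "{1..5::nat} = {1, 2, 3, 4, 5}"
    by auto
  then show ?thesis
    using assms
    by (simp add: rhs_def kinF_def yR_def yP_def xpow_vector3 powr_half_sqrt real_sqrt_mult
        vec_eq_iff forall_3 algebra_simps)
qed

definition rate_constants :: "nat \<Rightarrow> real" where
  "rate_constants r = (if r = 3 then 2 else 1)"

lemma equilibria_net:
  "rhs rate_constants (vector [1, 2, 1]) = 0" "rhs rate_constants (vector [4, 2, 4]) = 0"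
proof -
  have "sqrt (4 * 4) = (4::real)"
    by simp
  then show "rhs rate_constants (vector [1, 2, 1]) = 0" "rhs rate_constants (vector [4, 2, 4]) = 0"
    by (simp_all only: rhs_net) (simp_all add: rate_constants_def vector3_eq_0_iff)
qed

theorem mainTheorem7:
  shows "deficiency net = 1
    \<and> \<not> t_minimal net
    \<and> \<not> cut_pair net (vector [1, 1, 0]) (vector [0, 0, 2])
    \<and> (\<exists>k :: nat \<Rightarrow> real. (\<forall>r\<in>{1..5}. k r > 0) \<and>
         (\<exists>c1 c2. positive_vec c1 \<and> positive_vec c2 \<and> c1 \<noteq> c2 \<and>
            rhs k c1 = 0 \<and> rhs k c2 = 0 \<and> c1 - c2 \<in> stoich_subspace net))"
proof -
  have "positive_vec (vector [1, 2, 1])" "positive_vec (vector [4, 2, 4])"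
    by (simp_all add: positive_vec_def forall_3)
  moreover have "(vector [1, 2, 1] :: real^3) \<noteq> vector [4, 2, 4]"
    by (simp add: vector3_eq_iff)
  moreover have "\<forall>r\<in>{1..5}. rate_constants r > 0"
    by (simp add: rate_constants_def)
  ultimately show ?thesis
    using deficiency_net not_t_minimal_net not_cut_pair_net equilibria_net
    unfolding A1_A2_def two_A3_def stoich_subspace_net by blast
qed

end
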